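(* Let $T=(Q,\Sigma,\Delta,R,q_0)$ be a top-down tree transducer and let $A$ be the domain automaton of $T$. Let $S\neq\emptyset$ be a state of $A$ (i.e., a nonempty subset of $Q$). Then for every $s\in T_\Sigma$: $s\in\text{dom}(S)$ if and only if $s\in\bigcap_{q\in S}\text{dom}(q)$.
   Context: A top-down tree transducer $T=(Q,\Sigma,\Delta,R,q_0)$ has finite state set $Q$, ranked input/output alphabets $\Sigma,\Delta$, initial state $q_0$, and finite rule set $R$ of rules $q(a(x_1,\dots,x_k))\to t$ with $a\in\Sigma_k$ ($\Sigma_k$ = symbols of rank $k$) and $t$ a tree over $\Delta$ whose leaves may additionally be of the form $q'(x_i)$, $q'\in Q$, $i\in[k]$; rules are used as rewrite rules in the usual way. For a state $q$, $\text{dom}(q)$ is the set of $s\in T_\Sigma$ such that some tree over $\Delta$ is derivable from $q(s)$. A top-down tree automaton is a transducer with $\Sigma=\Delta$ all of whose rules have the form $p(a(x_1,\dots,x_k))\to a(p_1(x_1),\dots,p_k(x_k))$. For $q\in Q$ and $a\in\Sigma_k$, $\text{rhs}_T(q,a)$ is the set of right-hand sides of rules of $T$ with left-hand side $q(a(x_1,\dots,x_k))$. For a set $\Gamma$ of right-hand sides, $\Gamma[x_i]$ is the set of all $q'\in Q$ such that $q'(x_i)$ occurs in some tree of $\Gamma$. The domain automaton $A$ of $T$ is the top-down tree automaton over $\Sigma$ whose states are all subsets of $Q$, with initial state $\{q_0\}$, and with the following rules: for every $a\in\Sigma_k$, every nonempty $S=\{q_1,\dots,q_n\}\subseteq Q$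 and every choice of nonempty subsets $\Gamma_1\subseteq\text{rhs}_T(q_1,a),\dots,\Gamma_n\subseteq\text{rhs}_T(q_n,a)$, the rule $S(a(x_1,\dots,x_k))\to a(S_1(x_1),\dots,S_k(x_k))$ with $S_i=\bigcup_{j=1}^n\Gamma_j[x_i]$; and for every $a\in\Sigma_k$ the rule $\emptyset(a(x_1,\dots,x_k))\to a(\emptyset(x_1),\dots,\emptyset(x_k))$. For a state $S$ of $A$, $\text{dom}(S)$ is the set of trees $s$ from which (starting with $S(s)$) a tree over $\Sigma$ is derivable. *)

theory Defs
  imports Main
begin

datatype 'f tree = Node 'f "'f tree list"

inductive_set trees :: "('f \<times> nat) set \<Rightarrow> 'f tree set" for F where
  "(f, length ts) \<in> F \<Longrightarrow> (\<forall>t\<in>set ts. t \<in> trees F) \<Longrightarrow> Node f ts \<in> trees F"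

(* Right-hand sides: trees over the output alphabet whose leaves may be q'(x_i).
   RSt q i stands for q(x_(i+1)), i.e. variables are indexed from 0. *)
datatype ('q, 'g) rhs = RNode 'g "('q, 'g) rhs list" | RSt 'q nat

fun rhs_wf :: "('g \<times> nat) set \<Rightarrow> 'q set \<Rightarrow> nat \<Rightarrow> ('q, 'g) rhs \<Rightarrow> bool" where
  "rhs_wf D Q k (RNode g ts) = ((g, length ts) \<in> D \<and> (\<forall>t\<in>set ts. rhs_wf D Q k t))"
| "rhs_wf D Q k (RSt q i) = (q \<in> Q \<and> i < k)"

(* A rule (q, a, k, t) stands for q(a(x_1,...,x_k)) -> t *)
type_synonym ('q, 'f, 'g) rule = "'q \<times> 'f \<times> nat \<times> ('q, 'g) rhs"

record ('q, 'f, 'g) tdtt =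
  states :: "'q set"
  inp :: "('f \<times> nat) set"
  outp :: "('g \<times> nat) set"
  rules :: "('q, 'f, 'g) rule set"
  init :: 'q

definition tdtt_wf :: "('q, 'f, 'g) tdtt \<Rightarrow> bool" where
  "tdtt_wf T \<longleftrightarrow> finite (states T) \<and> finite (inp T) \<and> finite (outp T) \<and>
     finite (rules T) \<and> init T \<in> states T \<and>
     (\<forall>(q, a, k, t) \<in> rules T. q \<in> states T \<and> (a, k) \<in> inp T \<and>
        rhs_wf (outp T) (states T) k t)"

(* Sentential forms: trees over the output alphabet whose leaves may be q(s),
   s an input tree *)
datatype ('q, 'f, 'g) sf = SNode 'g "('q, 'f, 'g) sf list" | SSt 'q "'f tree"

fun inst :: "'f tree list \<Rightarrow> ('q, 'g) rhs \<Rightarrow> ('q, 'f, 'g) sf" where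
  "inst ss (RNode g ts) = SNode g (map (inst ss) ts)"
| "inst ss (RSt q i) = SSt q (ss ! i)"

fun emb :: "'g tree \<Rightarrow> ('q, 'f, 'g) sf" where
  "emb (Node g ts) = SNode g (map emb ts)"

inductive step :: "('q, 'f, 'g) rule set \<Rightarrow> ('q, 'f, 'g) sf \<Rightarrow> ('q, 'f, 'g) sf \<Rightarrow> bool"
  for R where
  root: "(q, a, length ss, t) \<in> R \<Longrightarrow> step R (SSt q (Node a ss)) (inst ss t)"
| ctx: "i < length us \<Longrightarrow> step R (us ! i) v \<Longrightarrow> step R (SNode g us) (SNode g (us[i := v]))"

definition dom_st :: "('q, 'f, 'g) tdtt \<Rightarrow> 'q \<Rightarrow> 'f tree set" where
  "dom_st T q = {s \<in> trees (inp T). \<exists>u \<in> trees (outp T). (step (rules T))\<^sup>*\<^sup>* (SSt q s) (emb u)}"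

definition rhs_set :: "('q, 'f, 'g) tdtt \<Rightarrow> 'q \<Rightarrow> 'f \<Rightarrow> nat \<Rightarrow> ('q, 'g) rhs set" where
  "rhs_set T q a k = {t. (q, a, k, t) \<in> rules T}"

fun states_at :: "nat \<Rightarrow> ('q, 'g) rhs \<Rightarrow> 'q set" where
  "states_at i (RNode g ts) = (\<Union>t\<in>set ts. states_at i t)"
| "states_at i (RSt q j) = (if j = i then {q} else {})"

definition gam_at :: "('q, 'g) rhs set \<Rightarrow> nat \<Rightarrow> 'q set" where
  "gam_at G i = (\<Union>t\<in>G. states_at i t)"

definition dom_aut_rules :: "('q, 'f, 'g) tdtt \<Rightarrow> ('q set, 'f, 'f) rule set" where
  "dom_aut_rules T =
     {(S, a, k, RNode a (map (\<lambda>i. RSt (\<Union>q\<in>S. gam_at (G q) i) i) [0..<k])) | S a k G.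
        (a, k) \<in> inp T \<and> S \<noteq> {} \<and> S \<subseteq> states T \<and>
        (\<forall>q\<in>S. G q \<noteq> {} \<and> G q \<subseteq> rhs_set T q a k)}
   \<union> {({}, a, k, RNode a (map (\<lambda>i. RSt {} i) [0..<k])) | a k. (a, k) \<in> inp T}"

definition domain_automaton :: "('q, 'f, 'g) tdtt \<Rightarrow> ('q set, 'f, 'f) tdtt" where
  "domain_automaton T = \<lparr>states = Pow (states T), inp = inp T, outp = inp T,
     rules = dom_aut_rules T, init = {init T}\<rparr>"

end

theory Submission
  imports Defs
begin

(* Call a sentential form productive if it derives an output tree. Rewriting is context-free,
   so SNode g us is productive iff all us are, q(a(ss)) iff some instance inst ss t of a
   q-rule is, and inst ss t iff q'(ss ! i) is for every q'(x_i) occurring in t.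
   At a(ss) the state S of the domain automaton picks a nonempty set of a-rules for each
   q in S and sends the union of their states at x_i to ss ! i. By induction on the input
   tree this succeeds iff every picked rule is productive for T, and picking one rule per
   state suffices. *)

definition productive :: "('q, 'f, 'g) rule set \<Rightarrow> ('g \<times> nat) set \<Rightarrow> ('q, 'f, 'g) sf \<Rightarrow> bool" where
  "productive R D \<phi> \<longleftrightarrow> (\<exists>u\<in>trees D. (step R)\<^sup>*\<^sup>* \<phi> (emb u))"

lemma steps_in_child:
  assumes "(step R)\<^sup>*\<^sup>* (us ! i) v" and "i < length us"
  shows "(step R)\<^sup>*\<^sup>* (SNode g us) (SNode g (us[i := v]))"
  using assms
proof (induction rule: rtranclp_induct)
  case base
  then show ?case by simp
next
  case (step v w)
  then have "step R (SNode g (us[i := v])) (SNode g (us[i := v, i := w]))"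
    by (intro step.ctx) auto
  with step show ?case by (simp add: rtranclp.rtrancl_into_rtrancl)
qed

lemma steps_in_children_after:
  "list_all2 (step R)\<^sup>*\<^sup>* us vs \<Longrightarrow> (step R)\<^sup>*\<^sup>* (SNode g (pre @ us)) (SNode g (pre @ vs))"
proof (induction us vs arbitrary: pre rule: list_all2_induct)
  case Nil
  then show ?case by simp
next
  case (Cons u us v vs)
  have "(step R)\<^sup>*\<^sup>* (SNode g (pre @ u # us)) (SNode g ((pre @ [v]) @ us))"
    using steps_in_child[of R "pre @ u # us" "length pre" v g] Cons.hyps(1) by simp
  also have "(step R)\<^sup>*\<^sup>* \<dots> (SNode g ((pre @ [v]) @ vs))"
    by (rule Cons.IH)
  finally show ?case by simp
qed

lemma steps_SNode_iff:
  "(step R)\<^sup>*\<^sup>* (SNode g us) w \<longleftrightarrow> (\<exists>vs. w = SNode g vs \<and> list_all2 (step R)\<^sup>*\<^sup>* us vs)"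
proof
  show "(step R)\<^sup>*\<^sup>* (SNode g us) w \<Longrightarrow> \<exists>vs. w = SNode g vs \<and> list_all2 (step R)\<^sup>*\<^sup>* us vs"
  proof (induction rule: rtranclp_induct)
    case base
    then show ?case by (simp add: list_all2_refl)
  next
    case (step w w')
    then obtain vs where w: "w = SNode g vs" and vs: "list_all2 (step R)\<^sup>*\<^sup>* us vs"
      by blast
    from step.hyps(2)[unfolded w] obtain i v
      where "i < length vs" "step R (vs ! i) v" "w' = SNode g (vs[i := v])"
      by (cases rule: step.cases) auto
    with vs show ?case
      by (auto simp: list_all2_conv_all_nth nth_list_update)
  qed
  show "\<exists>vs. w = SNode g vs \<and> list_all2 (step R)\<^sup>*\<^sup>* us vs \<Longrightarrow> (step R)\<^sup>*\<^sup>* (SNode g us) w"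
    using steps_in_children_after[where pre = "[]"] by auto
qed

lemma emb_eq_SNode_iff: "emb u = SNode g vs \<longleftrightarrow> (\<exists>us. u = Node g us \<and> vs = map emb us)"
  by (cases u) auto

lemma Node_in_trees_iff: "Node g us \<in> trees D \<longleftrightarrow> (g, length us) \<in> D \<and> (\<forall>u\<in>set us. u \<in> trees D)"
  by (auto elim: trees.cases intro: trees.intros)

lemma productive_SNode_iff:
  "productive R D (SNode g \<phi>s) \<longleftrightarrow> (g, length \<phi>s) \<in> D \<and> (\<forall>\<phi>\<in>set \<phi>s. productive R D \<phi>)"
proof
  assume "productive R D (SNode g \<phi>s)"
  then obtain us where "Node g us \<in> trees D" and "list_all2 (step R)\<^sup>*\<^sup>* \<phi>s (map emb us)"
    by (auto simp: productive_def steps_SNode_iff emb_eq_SNode_iff)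
  then show "(g, length \<phi>s) \<in> D \<and> (\<forall>\<phi>\<in>set \<phi>s. productive R D \<phi>)"
    by (fastforce simp: productive_def Node_in_trees_iff list_all2_conv_all_nth in_set_conv_nth)
next
  assume "(g, length \<phi>s) \<in> D \<and> (\<forall>\<phi>\<in>set \<phi>s. productive R D \<phi>)"
  moreover obtain f where "\<forall>\<phi>\<in>set \<phi>s. f \<phi> \<in> trees D \<and> (step R)\<^sup>*\<^sup>* \<phi> (emb (f \<phi>))"
    using calculation unfolding productive_def by metis
  ultimately have "Node g (map f \<phi>s) \<in> trees D"
    and "(step R)\<^sup>*\<^sup>* (SNode g \<phi>s) (emb (Node g (map f \<phi>s)))"
    by (auto simp: Node_in_trees_iff steps_SNode_iff list_all2_map2 list_all2_same)
  then show "productive R D (SNode g \<phi>s)"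
    unfolding productive_def by blast
qed

lemma productive_SSt_Node_iff:
  "productive R D (SSt q (Node a ss)) \<longleftrightarrow> (\<exists>t. (q, a, length ss, t) \<in> R \<and> productive R D (inst ss t))"
proof
  assume "productive R D (SSt q (Node a ss))"
  then obtain u where u: "u \<in> trees D" "(step R)\<^sup>*\<^sup>* (SSt q (Node a ss)) (emb u)"
    unfolding productive_def by blast
  from u(2) show "\<exists>t. (q, a, length ss, t) \<in> R \<and> productive R D (inst ss t)"
  proof (cases rule: converse_rtranclpE)
    case base
    then show ?thesis by (cases u) simp
  next
    case (step \<phi>)
    then show ?thesis
      using u(1) by (cases rule: step.cases) (auto simp: productive_def)
  qed
next
  assume "\<exists>t. (q, a, length ss, t) \<in> R \<and> productive R D (inst ss t)"
  then show "productive R D (SSt q (Node a ss))"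
    unfolding productive_def by (meson converse_rtranclp_into_rtranclp step.root)
qed

lemma productive_inst_iff:
  assumes "rhs_wf D Q k t"
  shows "productive R D (inst ss t) \<longleftrightarrow> (\<forall>i. \<forall>q\<in>states_at i t. productive R D (SSt q (ss ! i)))"
  using assms by (induction t) (auto simp: productive_SNode_iff)

lemma states_at_rhs_wf: "rhs_wf D Q k t \<Longrightarrow> q \<in> states_at i t \<Longrightarrow> q \<in> Q \<and> i < k"
  by (induction t) (auto split: if_splits)

lemma tdtt_wf_rules_rhs_wf: "tdtt_wf T \<Longrightarrow> (q, a, k, t) \<in> rules T \<Longrightarrow> rhs_wf (outp T) (states T) k t"
  unfolding tdtt_wf_def by blast

lemma gam_at_rhs_set_wf:
  assumes "tdtt_wf T" and "G \<subseteq> rhs_set T q a k" and "q' \<in> gam_at G i"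
  shows "q' \<in> states T \<and> i < k"
proof -
  obtain t where "(q, a, k, t) \<in> rules T" and "q' \<in> states_at i t"
    using assms(2,3) by (auto simp: gam_at_def rhs_set_def)
  from states_at_rhs_wf[OF tdtt_wf_rules_rhs_wf[OF assms(1) this(1)] this(2)] show ?thesis .
qed

lemma ex_nonempty_subsets_iff:
  "(\<exists>G. (\<forall>x\<in>S. G x \<noteq> {} \<and> G x \<subseteq> A x) \<and> (\<forall>x\<in>S. \<forall>y\<in>G x. P y)) \<longleftrightarrow> (\<forall>x\<in>S. \<exists>y\<in>A x. P y)"
proof
  assume "\<forall>x\<in>S. \<exists>y\<in>A x. P y"
  then obtain f where "\<forall>x\<in>S. f x \<in> A x \<and> P (f x)"
    by metis
  then show "\<exists>G. (\<forall>x\<in>S. G x \<noteq> {} \<and> G x \<subseteq> A x) \<and> (\<forall>x\<in>S. \<forall>y\<in>G x. P y)"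
    by (intro exI[of _ "\<lambda>x. {f x}"]) auto
next
  assume "\<exists>G. (\<forall>x\<in>S. G x \<noteq> {} \<and> G x \<subseteq> A x) \<and> (\<forall>x\<in>S. \<forall>y\<in>G x. P y)"
  then show "\<forall>x\<in>S. \<exists>y\<in>A x. P y"
    by (metis ex_in_conv subsetD)
qed

lemma dom_aut_rules_iff:
  "(S, a, k, r) \<in> dom_aut_rules T \<longleftrightarrow> (a, k) \<in> inp T \<and> S \<subseteq> states T \<and>
     (\<exists>G. (\<forall>q\<in>S. G q \<noteq> {} \<and> G q \<subseteq> rhs_set T q a k) \<and>
          r = RNode a (map (\<lambda>i. RSt (\<Union>q\<in>S. gam_at (G q) i) i) [0..<k]))"
  unfolding dom_aut_rules_def by auto

lemma productive_inst_dom_aut_rhs: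
  "(a, k) \<in> D \<Longrightarrow> productive R D (inst ss (RNode a (map (\<lambda>i. RSt (F i) i) [0..<k])))
    \<longleftrightarrow> (\<forall>i<k. productive R D (SSt (F i) (ss ! i)))"
  by (simp add: productive_SNode_iff atLeast0LessThan lessThan_def)

lemma productive_dom_aut_iff:
  fixes T :: "('q, 'f, 'g) tdtt"
  assumes wf: "tdtt_wf T" and "s \<in> trees (inp T)" and "S \<subseteq> states T"
  shows "productive (dom_aut_rules T) (inp T) (SSt S s) \<longleftrightarrow>
    (\<forall>q\<in>S. productive (rules T) (outp T) (SSt q s))"
  using assms(2,3)
proof (induction arbitrary: S)
  case (1 a ss)
  let ?PA = "\<lambda>S s. productive (dom_aut_rules T) (inp T) (SSt S s)"
  let ?PT = "\<lambda>q s. productive (rules T) (outp T) (SSt q s)"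
  define k where "k = length ss"
  define admissible where "admissible (G :: 'q \<Rightarrow> ('q, 'g) rhs set) \<longleftrightarrow>
    (\<forall>q\<in>S. G q \<noteq> {} \<and> G q \<subseteq> rhs_set T q a k)" for G
  define Si where "Si (G :: 'q \<Rightarrow> ('q, 'g) rhs set) i = (\<Union>q\<in>S. gam_at (G q) i)" for G i
  have Si_wf: "q' \<in> states T \<and> i < k" if "admissible G" "q \<in> S" "q' \<in> gam_at (G q) i" for G q q' i
    using that by (intro gam_at_rhs_set_wf[OF wf, of "G q" q]) (auto simp: admissible_def)
  have Si_states: "Si G i \<subseteq> states T" if "admissible G" for G i
    using Si_wf[OF that] unfolding Si_def by blast
  have IH: "?PA S' (ss ! i) \<longleftrightarrow> (\<forall>q'\<in>S'. ?PT q' (ss ! i))" if "i < k" "S' \<subseteq> states T" for i S'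
    using "1.IH" nth_mem[of i ss] that unfolding k_def by blast
  have productive_inst_rules:
    "productive (rules T) (outp T) (inst ss t) \<longleftrightarrow> (\<forall>i. \<forall>q'\<in>states_at i t. ?PT q' (ss ! i))"
    if "t \<in> rhs_set T q a k" for q t
    using that tdtt_wf_rules_rhs_wf[OF wf] by (intro productive_inst_iff) (simp add: rhs_set_def)
  have Ball_Si_iff: "(\<forall>i<k. \<forall>q'\<in>Si G i. P q' i) \<longleftrightarrow> (\<forall>q\<in>S. \<forall>t\<in>G q. \<forall>i. \<forall>q'\<in>states_at i t. P q' i)"
    if "admissible G" for G P
    using Si_wf[OF that] unfolding Si_def gam_at_def by blast
  have "?PA S (Node a ss) \<longleftrightarrow>
      (\<exists>G. admissible G \<and>
         productive (dom_aut_rules T) (inp T) (inst ss (RNode a (map (\<lambda>i. RSt (Si G i) i) [0..<k]))))"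
    using "1.hyps" "1.prems"
    unfolding productive_SSt_Node_iff dom_aut_rules_iff admissible_def Si_def k_def by blast
  also have "\<dots> \<longleftrightarrow> (\<exists>G. admissible G \<and> (\<forall>i<k. ?PA (Si G i) (ss ! i)))"
    by (simp only: productive_inst_dom_aut_rhs[OF "1.hyps"[folded k_def]])
  also have "\<dots> \<longleftrightarrow> (\<exists>G. admissible G \<and> (\<forall>i<k. \<forall>q'\<in>Si G i. ?PT q' (ss ! i)))"
    by (simp add: IH Si_states cong: conj_cong)
  also have "\<dots> \<longleftrightarrow> (\<exists>G. admissible G \<and> (\<forall>q\<in>S. \<forall>t\<in>G q. \<forall>i. \<forall>q'\<in>states_at i t. ?PT q' (ss ! i)))"
    by (intro ex_cong1 conj_cong refl Ball_Si_iff)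
  also have "\<dots> \<longleftrightarrow> (\<forall>q\<in>S. \<exists>t\<in>rhs_set T q a k. \<forall>i. \<forall>q'\<in>states_at i t. ?PT q' (ss ! i))"
    unfolding admissible_def by (rule ex_nonempty_subsets_iff)
  also have "\<dots> \<longleftrightarrow> (\<forall>q\<in>S. ?PT q (Node a ss))"
    using productive_inst_rules unfolding productive_SSt_Node_iff k_def[symmetric] rhs_set_def
    by blast
  finally show ?case .
qed

lemma dom_st_eq: "dom_st T q = {s \<in> trees (inp T). productive (rules T) (outp T) (SSt q s)}"
  by (simp add: dom_st_def productive_def)

theorem lemma1:
  fixes T :: "('q, 'f, 'g) tdtt" and S :: "'q set" and s :: "'f tree"
  assumes "tdtt_wf T" and "S \<subseteq> states T" and "S \<noteq> {}" and "s \<in> trees (inp T)"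
  shows "s \<in> dom_st (domain_automaton T) S \<longleftrightarrow> s \<in> (\<Inter>q\<in>S. dom_st T q)"
  using productive_dom_aut_iff[OF assms(1,4,2)] assms(4)
  by (simp add: dom_st_eq domain_automaton_def)

end
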